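(* Let $k \ge 2$ and $E \ge 1$ be integers, and let $n_{k,E}$ be the smallest positive integer $n$ such that for every subset $S \subseteq \{0,\dots,n-1\}$ with at most $E$ elements there exist integers $r \ge 0$ and $s > 0$ with $r + s(k-1) \le n-1$ and $r + is \notin S$ for all $0 \le i \le k-1$. Then $n_{k,E} \le k(E+1)$, and $n_{k,E} = k(E+1)$ if and only if $E + 2 \le g$, where $g$ is the smallest prime factor of $k$.
   Context: $n_{k,E}$ is the minimum length of a sequence such that, whatever the positions of at most $E$ errors, some arithmetic progression of $k$ indices inside $\{0,\dots,n-1\}$ avoids all error positions. *)

theory Defs
  imports "HOL-Computational_Algebra.Primes"
begin

definition ap_avoid :: "nat \<Rightarrow> nat \<Rightarrow> nat \<Rightarrow> bool" where
  "ap_avoid k E n \<longleftrightarrow>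
     (\<forall>S. S \<subseteq> {0..<n} \<and> card S \<le> E \<longrightarrow>
        (\<exists>r s. s > 0 \<and> r + s * (k - 1) \<le> n - 1 \<and> (\<forall>i. i \<le> k - 1 \<longrightarrow> r + i * s \<notin> S)))"

definition n_kE :: "nat \<Rightarrow> nat \<Rightarrow> nat" where
  "n_kE k E = (LEAST n. n > 0 \<and> ap_avoid k E n)"

definition smallest_prime_factor :: "nat \<Rightarrow> nat" where
  "smallest_prime_factor k = (LEAST p. prime p \<and> p dvd k)"

end

theory Submission
  imports Defs "HOL-Number_Theory.Cong"
begin

text \<open>
  If no \<open>k\<close>-term progression in \<open>{0..<n}\<close> avoids \<open>S\<close>, then in particular every block of \<open>k\<close>
  consecutive positions meets \<open>S\<close>. For \<open>n = k(E+1)\<close> there are \<open>E+1\<close> disjoint blocks, so some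
  progression always avoids \<open>E\<close> errors. For \<open>n = k(E+1) - 1\<close> the count is tight: a blocking set
  of size \<open>E\<close> must consist of residues \<open>k-1\<close> modulo \<open>k\<close>, and when the smallest prime factor \<open>g\<close>
  of \<open>k\<close> is at most \<open>E+1\<close> the progression \<open>0, g, \<dots>, (k-1)g\<close> fits and avoids that residue class.
  When \<open>g \<ge> E+2\<close>, the \<open>E\<close> positions \<open>\<equiv> k-1 (mod k)\<close> block everything below \<open>k(E+1)\<close>: a step
  coprime to \<open>k\<close> runs through all residues, and any other step is at least \<open>g\<close>, too long to fit.
\<close>

definition has_avoiding_ap :: "nat \<Rightarrow> nat \<Rightarrow> nat set \<Rightarrow> bool" where
  "has_avoiding_ap k n S \<longleftrightarrow>
     (\<exists>r s. s > 0 \<and> r + s * (k - 1) \<le> n - 1 \<and> (\<forall>i. i \<le> k - 1 \<longrightarrow> r + i * s \<notin> S))"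

lemma ap_avoid_iff_has_avoiding_ap:
  "ap_avoid k E n \<longleftrightarrow> (\<forall>S. S \<subseteq> {0..<n} \<and> card S \<le> E \<longrightarrow> has_avoiding_ap k n S)"
  by (simp add: ap_avoid_def has_avoiding_ap_def)

lemma has_avoiding_ap_if_window_free:
  assumes "0 < k" and "t + k \<le> n" and "S \<inter> {t..<t + k} = {}"
  shows "has_avoiding_ap k n S"
  unfolding has_avoiding_ap_def
proof (intro exI conjI allI impI)
  show "t + 1 * (k - 1) \<le> n - 1"
    using assms(1,2) by simp
  fix i assume "i \<le> k - 1"
  then have "t + i * 1 \<in> {t..<t + k}"
    using assms(1) by simp
  then show "t + i * 1 \<notin> S"
    using assms(3) by blast
qed simp

lemma window_hit_if_no_avoiding_ap:
  assumes "\<not> has_avoiding_ap k n S" and "0 < k" and "t + k \<le> n"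
  shows "S \<inter> {t..<t + k} \<noteq> {}"
  using assms has_avoiding_ap_if_window_free by blast

lemma card_ge_if_windows_hit:
  assumes "finite S" and hit: "\<And>t. t + k \<le> n \<Longrightarrow> S \<inter> {t..<t + k} \<noteq> {}"
    and "a + j * k \<le> n"
  shows "j \<le> card (S \<inter> {a..<a + j * k})"
  using assms(3)
proof (induction j arbitrary: a)
  case 0
  then show ?case by simp
next
  case (Suc j)
  have "S \<inter> {a..<a + Suc j * k} = (S \<inter> {a..<a + k}) \<union> (S \<inter> {a + k..<(a + k) + j * k})"
    by auto
  moreover have "S \<inter> {a..<a + k} \<noteq> {}"
    using hit Suc.prems by simp
  then have "1 \<le> card (S \<inter> {a..<a + k})"
    using assms(1) by (simp add: Suc_le_eq card_gt_0_iff)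
  moreover have "(a + k) + j * k \<le> n"
    using Suc.prems by simp
  then have "j \<le> card (S \<inter> {a + k..<(a + k) + j * k})"
    by (rule Suc.IH)
  ultimately show ?case
    using assms(1) by (simp add: card_Un_disjoint ivl_disj_int_two(3) disjoint_iff)
qed

lemma ap_avoid_at_upper_bound:
  assumes "0 < k"
  shows "ap_avoid k E (k * (E + 1))"
  unfolding ap_avoid_iff_has_avoiding_ap
proof (intro allI impI)
  fix S assume S: "S \<subseteq> {0..<k * (E + 1)} \<and> card S \<le> E"
  then have "finite S"
    using finite_subset by blast
  show "has_avoiding_ap k (k * (E + 1)) S"
  proof (rule ccontr)
    assume "\<not> has_avoiding_ap k (k * (E + 1)) S"
    then have hit: "\<And>t. t + k \<le> k * (E + 1) \<Longrightarrow> S \<inter> {t..<t + k} \<noteq> {}"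
      using window_hit_if_no_avoiding_ap assms by blast
    have "E + 1 \<le> card (S \<inter> {0..<0 + (E + 1) * k})"
      using card_ge_if_windows_hit[of S k "k * (E + 1)" 0 "E + 1"] \<open>finite S\<close> hit
      by (simp add: mult.commute)
    also have "\<dots> \<le> card S"
      using \<open>finite S\<close> by (simp add: card_mono)
    finally show False
      using S by simp
  qed
qed

text \<open>The three parts \<open>S \<inter> [0, qk)\<close>, \<open>{x}\<close> and \<open>S \<inter> (x, Ek + r]\<close>, where \<open>x = qk + r\<close> with
  \<open>r < k - 1\<close>, each tile by whole blocks and together already contain \<open>E + 1\<close> points.\<close>
lemma blocking_set_residue:
  assumes "finite S" and "card S \<le> E"
    and hit: "\<And>t. t + k \<le> E * k + (k - 1) \<Longrightarrow> S \<inter> {t..<t + k} \<noteq> {}"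
    and "x \<in> S" and "x < E * k + (k - 1)"
  shows "x mod k = k - 1"
proof (rule ccontr)
  assume ne: "x mod k \<noteq> k - 1"
  define q where "q = x div k"
  have "0 < k"
    using hit[of 0] by (cases k) auto
  then have "x mod k < k - 1"
    using ne mod_less_divisor[of k x] by linarith
  have x: "x = q * k + x mod k"
    unfolding q_def by simp
  have "q * k < (E + 1) * k"
    using x assms(5) by simp
  then have "q < E + 1"
    using mult_less_cancel2 by blast
  then have "q \<le> E"
    by simp
  have count: "\<And>a j. a + j * k \<le> E * k + (k - 1) \<Longrightarrow> j \<le> card (S \<inter> {a..<a + j * k})"
    using card_ge_if_windows_hit[of S k "E * k + (k - 1)"] assms(1) hit by blast
  define A where "A = S \<inter> {0..<0 + q * k}"
  define B where "B = S \<inter> {x + 1..<(x + 1) + (E - q) * k}"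
  have "q \<le> card A"
    unfolding A_def using x assms(5)
    by (intro count) simp
  moreover have "(x + 1) + (E - q) * k \<le> E * k + (k - 1)"
    using x \<open>q \<le> E\<close> \<open>x mod k < k - 1\<close> by (simp add: diff_mult_distrib)
  then have "E - q \<le> card B"
    unfolding B_def by (rule count)
  moreover have "A \<inter> B = {}" and "x \<notin> A \<union> B"
    unfolding A_def B_def using x by auto
  then have "card (insert x (A \<union> B)) = Suc (card A + card B)"
    unfolding A_def B_def using assms(1) by (simp add: card_Un_disjoint)
  moreover have "card (insert x (A \<union> B)) \<le> card S"
    unfolding A_def B_def using assms(1,4) by (intro card_mono) auto
  ultimately show False
    using assms(2) \<open>q \<le> E\<close> by linarith
qed

lemma
  assumes "k \<noteq> 1"
  shows prime_smallest_prime_factor: "prime (smallest_prime_factor k)"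
    and smallest_prime_factor_dvd: "smallest_prime_factor k dvd k"
proof -
  obtain p where "prime p" "p dvd k"
    using prime_factor_nat assms by blast
  then have "prime (smallest_prime_factor k) \<and> smallest_prime_factor k dvd k"
    unfolding smallest_prime_factor_def by (rule LeastI[of _ p, OF conjI])
  then show "prime (smallest_prime_factor k)" and "smallest_prime_factor k dvd k"
    by auto
qed

lemma smallest_prime_factor_le:
  assumes "prime p" and "p dvd k"
  shows "smallest_prime_factor k \<le> p"
  unfolding smallest_prime_factor_def using assms by (intro Least_le) simp

lemma smallest_prime_factor_le_if_not_coprime:
  assumes "\<not> coprime k s" and "0 < s"
  shows "smallest_prime_factor k \<le> s"
proof -
  obtain p where "prime p" "p dvd gcd k s"
    using prime_factor_nat assms(1) by (metis coprime_iff_gcd_eq_1)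
  then have "smallest_prime_factor k \<le> p"
    by (intro smallest_prime_factor_le) auto
  also have "p \<le> s"
    using \<open>p dvd gcd k s\<close> assms(2) by (auto intro: dvd_imp_le dest: dvd_trans)
  finally show ?thesis .
qed

lemma coprime_progression_hits_residue:
  fixes k s r c :: nat
  assumes "coprime s k" and "0 < k"
  shows "\<exists>i<k. (r + i * s) mod k = c mod k"
proof -
  obtain x where x: "[s * x = c + (k - 1) * r] (mod k)"
    using cong_solve_dvd_nat[of s k "c + (k - 1) * r"] assms(1) by auto
  have "[(x mod k) * s = s * x] (mod k)"
    by (simp add: cong_def mod_mult_right_eq mult.commute)
  then have "[r + (x mod k) * s = r + (c + (k - 1) * r)] (mod k)"
    using x by (intro cong_add cong_refl) (rule cong_trans)
  also have "r + (c + (k - 1) * r) = c + r * k"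
    using assms(2) by (cases k) (simp_all add: algebra_simps)
  also have "[c + r * k = c] (mod k)"
    by (simp add: cong_def)
  finally show ?thesis
    using assms(2) unfolding cong_def by (intro exI[of _ "x mod k"]) simp
qed

lemma not_ap_avoid_below_upper_bound:
  assumes "2 \<le> k" and "E + 2 \<le> smallest_prime_factor k" and "n < k * (E + 1)"
  shows "\<not> ap_avoid k E n"
proof
  assume "ap_avoid k E n"
  define S where "S = (\<lambda>j. j * k + (k - 1)) ` {..<E} \<inter> {0..<n}"
  have "card S \<le> card ((\<lambda>j. j * k + (k - 1)) ` {..<E})"
    unfolding S_def by (intro card_mono) auto
  also have "\<dots> \<le> E"
    using card_image_le[of "{..<E}"] by simp
  finally obtain r s where "0 < s" and fits: "r + s * (k - 1) \<le> n - 1"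
    and avoid: "\<forall>i. i \<le> k - 1 \<longrightarrow> r + i * s \<notin> S"
    using \<open>ap_avoid k E n\<close> unfolding ap_avoid_def S_def by blast
  have "0 < s * (k - 1)"
    using \<open>0 < s\<close> assms(1) by simp
  then have fits': "r + s * (k - 1) < n"
    using fits by linarith
  show False
  proof (cases "coprime s k")
    case True
    then obtain i where "i < k" and i: "(r + i * s) mod k = (k - 1) mod k"
      using coprime_progression_hits_residue[OF True, of r "k - 1"] assms(1) by auto
    define x where "x = r + i * s"
    have "i \<le> k - 1"
      using \<open>i < k\<close> by simp
    then have "i * s \<le> s * (k - 1)"
      by (simp add: mult.commute)
    then have "x < n"
      unfolding x_def using fits' by linarith
    have "x mod k = k - 1"
      using i assms(1) unfolding x_def by simp
    then have x: "x = (x div k) * k + (k - 1)"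
      using div_mult_mod_eq[of x k] by simp
    moreover have "k * (E + 1) = E * k + k"
      by simp
    ultimately have "(x div k) * k < E * k"
      using \<open>x < n\<close> assms(1,3) by linarith
    then have "x div k < E"
      using mult_less_cancel2 by blast
    then have "x \<in> S"
      unfolding S_def using x \<open>x < n\<close> by (auto intro!: image_eqI[of _ _ "x div k"])
    then show False
      using avoid \<open>i \<le> k - 1\<close> unfolding x_def by blast
  next
    case False
    then have "E + 2 \<le> s"
      using smallest_prime_factor_le_if_not_coprime[of k s] \<open>0 < s\<close> assms(2)
      by (simp add: coprime_commute)
    moreover have "smallest_prime_factor k \<le> k"
      using smallest_prime_factor_dvd[of k] assms(1) by (intro dvd_imp_le) auto
    then have "E + 2 \<le> k"
      using assms(2) by simp
    then have "k * (E + 1) \<le> (E + 2) * (k - 1)"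
      by (cases k) (simp_all add: algebra_simps)
    ultimately have "k * (E + 1) \<le> s * (k - 1)"
      using mult_le_mono1 order_trans by blast
    then show False
      using fits' assms(3) by linarith
  qed
qed

lemma ap_avoid_below_upper_bound:
  assumes "2 \<le> k" and "smallest_prime_factor k \<le> E + 1"
  shows "ap_avoid k E (k * (E + 1) - 1)"
  unfolding ap_avoid_iff_has_avoiding_ap
proof (intro allI impI)
  fix S assume S: "S \<subseteq> {0..<k * (E + 1) - 1} \<and> card S \<le> E"
  then have "finite S"
    using finite_subset by blast
  define g where "g = smallest_prime_factor k"
  have "prime g" and "g dvd k"
    unfolding g_def using prime_smallest_prime_factor smallest_prime_factor_dvd assms(1)
    by auto
  then have "2 \<le> g"
    by (simp add: prime_ge_2_nat)
  have N: "k * (E + 1) - 1 = E * k + (k - 1)"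
    using assms(1) by (simp add: algebra_simps)
  show "has_avoiding_ap k (k * (E + 1) - 1) S"
  proof (rule ccontr)
    assume "\<not> has_avoiding_ap k (k * (E + 1) - 1) S"
    then have hit: "\<And>t. t + k \<le> E * k + (k - 1) \<Longrightarrow> S \<inter> {t..<t + k} \<noteq> {}"
      using window_hit_if_no_avoiding_ap assms(1) N by fastforce
    have residue: "x mod k = k - 1" if "x \<in> S" for x
      using blocking_set_residue[OF \<open>finite S\<close> _ hit that] S that N by auto
    have "g * (k - 1) \<le> (E + 1) * (k - 1)"
      using assms(2) unfolding g_def by (rule mult_le_mono1)
    moreover have "(E + 1) * (k - 1) \<le> k * (E + 1) - 1 - 1"
      using assms \<open>2 \<le> g\<close> unfolding g_def by (cases k) (simp_all add: algebra_simps)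
    ultimately have "0 + g * (k - 1) \<le> k * (E + 1) - 1 - 1"
      by simp
    moreover have "0 + i * g \<notin> S" for i
    proof
      assume "0 + i * g \<in> S"
      then have "(i * g) mod k = k - 1"
        using residue by simp
      moreover have "g dvd (i * g) mod k"
        using \<open>g dvd k\<close> by (simp add: dvd_mod)
      ultimately have "g dvd k - (k - 1)"
        using \<open>g dvd k\<close> by (simp add: dvd_diff_nat)
      then show False
        using assms(1) \<open>2 \<le> g\<close> by simp
    qed
    ultimately have "has_avoiding_ap k (k * (E + 1) - 1) S"
      unfolding has_avoiding_ap_def using \<open>2 \<le> g\<close> by (intro exI[of _ 0] exI[of _ g]) simp
    with \<open>\<not> has_avoiding_ap k (k * (E + 1) - 1) S\<close> show False ..
  qed
qed

theorem lemma2: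
  fixes k E :: nat
  assumes "k \<ge> 2" and "E \<ge> 1"
  shows "n_kE k E \<le> k * (E + 1) \<and>
         (n_kE k E = k * (E + 1) \<longleftrightarrow> E + 2 \<le> smallest_prime_factor k)"
proof -
  have upper: "0 < k * (E + 1) \<and> ap_avoid k E (k * (E + 1))"
    using assms(1) ap_avoid_at_upper_bound by simp
  then have le: "n_kE k E \<le> k * (E + 1)"
    unfolding n_kE_def by (rule Least_le)
  have "n_kE k E = k * (E + 1)" if "E + 2 \<le> smallest_prime_factor k"
    unfolding n_kE_def using upper not_ap_avoid_below_upper_bound[OF assms(1) that]
    by (intro Least_equality) (auto simp: not_less[symmetric])
  moreover have "n_kE k E < k * (E + 1)" if "smallest_prime_factor k \<le> E + 1"
  proof -
    have "0 < k * (E + 1) - 1 \<and> ap_avoid k E (k * (E + 1) - 1)"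
      using assms(1) ap_avoid_below_upper_bound[OF assms(1) that] by (simp add: algebra_simps)
    then have "n_kE k E \<le> k * (E + 1) - 1"
      unfolding n_kE_def by (rule Least_le)
    then show ?thesis
      using upper by linarith
  qed
  ultimately show ?thesis
    using le by fastforce
qed

end
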